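(* Let $(Q,P)$ be a weakly quasi-lattice ordered group and let $\Lambda$ be a $P$-graph with $\mathrm{FA}(\Lambda)\neq\emptyset$. Under the homeomorphism $z\mapsto(z,e,z)$ from $\mathcal{X}(\Lambda)$ onto the unit space of the path groupoid $\mathcal{G}(\Lambda)$, the boundary-path space $\partial\mathcal{X}(\Lambda)$ is identified with a closed invariant subset of the unit space of $\mathcal{G}(\Lambda)$.
   Context: $(Q,P)$ weakly quasi-lattice ordered: $Q$ a discrete group, $P\subseteq Q$ a subsemigroup containing the identity $e$ with $P\cap P^{-1}=\{e\}$, and, with $p\le r$ meaning $pq=r$ for some $q\in P$, any two elements of $P$ with a common upper bound have a least common upper bound. A $P$-graph is a countable small category $\Lambda$ (range/source $r,s$) with a functor $d:\Lambda\to P$ with unique factorisation (if $d(\lambda)=pq$ there are unique $\mu,\nu$ with $\lambda=\mu\nu$, $d(\mu)=p$, $d(\nu)=q$). Write $\Lambda^m=d^{-1}(m)$, $\lambda\Lambda=\{\lambda\mu: s(\lambda)=r(\mu)\}$, $\mu\preceq\lambda$ iff $\lambda\in\mu\Lambda$. $\mathrm{FA}(\Lambda)$ is the set of $\lambda$ such that for all $\mu\in\lambda\Lambda,\nu\in\Lambda$ there is finite $J\subseteq\Lambda$ with $\mu\Lambda\cap\nu\Lambda=\bigcup_{\kappa\in J}\kappa\Lambda$. A filter is a nonempty hereditary and directed subset of $\Lambda$ (w.r.t. $\preceq$); $\mathcal{F}(\Lambda)$ the filters, $\mathcal{U}(\Lambda)$ the maximal filters. $\mathcal{P}(\Lambda)$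 has the product topology from $\{0,1\}^\Lambda$; subsets have the subspace topology. Path space $\mathcal{X}(\Lambda)=\{x\in\mathcal{F}(\Lambda): x\cap\mathrm{FA}(\Lambda)\neq\emptyset\}$; boundary-path space $\partial\mathcal{X}(\Lambda)$ = closure of $\mathcal{U}(\Lambda)\cap\mathcal{X}(\Lambda)$ in $\mathcal{X}(\Lambda)$. For $x\in\mathcal{X}(\Lambda)$, $m\in P$ with $x\cap\Lambda^m\neq\emptyset$ (write $x\in\mathrm{dom}(m)$), $x(0,m)$ is the unique element of $x\cap\Lambda^m$ and $x\cdot m=\{\mu: x(0,m)\mu\in x\}$. $\mathcal{G}(\Lambda)$ is the set of $(x,q,y)\in\mathcal{X}(\Lambda)\times Q\times\mathcal{X}(\Lambda)$ with $q=mn^{-1}$, $x\in\mathrm{dom}(m)$, $y\in\mathrm{dom}(n)$, $x\cdot m=y\cdot n$ for some $m,n\in P$; product $(x,q,y)(y,r,z)=(x,qr,z)$, inverse $(y,q^{-1},x)$, so range $r(x,q,y)=(x,e,x)$ and source $s(x,q,y)=(y,e,y)$; topology with basis $\{(x,mn^{-1},y)\in\mathcal{G}(\Lambda): x\in U,y\in V,x\cdot m=y\cdot n\}$, $m,n\in P$, $U,V$ open. A subset $U$ of the unit space is invariant if $r(s^{-1}(U))\subseteq U$. *)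

theory Defs
  imports "HOL-Analysis.Abstract_Topology" "HOL-Algebra.Group"
begin

definition ple :: "('g, 'b) monoid_scheme \<Rightarrow> 'g set \<Rightarrow> 'g \<Rightarrow> 'g \<Rightarrow> bool" where
  "ple Q P p r \<longleftrightarrow> (\<exists>q\<in>P. p \<otimes>\<^bsub>Q\<^esub> q = r)"

definition wqlo :: "('g, 'b) monoid_scheme \<Rightarrow> 'g set \<Rightarrow> bool" where
  "wqlo Q P \<longleftrightarrow> group Q \<and> P \<subseteq> carrier Q \<and> \<one>\<^bsub>Q\<^esub> \<in> P
     \<and> (\<forall>p\<in>P. \<forall>q\<in>P. p \<otimes>\<^bsub>Q\<^esub> q \<in> P)
     \<and> P \<inter> {inv\<^bsub>Q\<^esub> p | p. p \<in> P} = {\<one>\<^bsub>Q\<^esub>}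
     \<and> (\<forall>p\<in>P. \<forall>q\<in>P. (\<exists>u\<in>P. ple Q P p u \<and> ple Q P q u) \<longrightarrow>
          (\<exists>l\<in>P. ple Q P p l \<and> ple Q P q l \<and> (\<forall>u\<in>P. ple Q P p u \<and> ple Q P q u \<longrightarrow> ple Q P l u)))"

text \<open>A small category given by its set of morphisms; objects are identified with
  their identity morphisms.  rg/sr are range/source (returning identity morphisms),
  cp mu nu is the composite mu nu, defined when sr mu = rg nu; dg is the degree functor.\<close>
record ('a, 'g) pgraph =
  Mor :: "'a set"
  rg :: "'a \<Rightarrow> 'a"
  sr :: "'a \<Rightarrow> 'a"
  cp :: "'a \<Rightarrow> 'a \<Rightarrow> 'a"
  dg :: "'a \<Rightarrow> 'g"

definition small_cat :: "('a, 'g) pgraph \<Rightarrow> bool" where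
  "small_cat L \<longleftrightarrow>
     (\<forall>\<mu>\<in>Mor L. rg L \<mu> \<in> Mor L \<and> sr L \<mu> \<in> Mor L
        \<and> rg L (rg L \<mu>) = rg L \<mu> \<and> sr L (rg L \<mu>) = rg L \<mu>
        \<and> rg L (sr L \<mu>) = sr L \<mu> \<and> sr L (sr L \<mu>) = sr L \<mu>
        \<and> cp L (rg L \<mu>) \<mu> = \<mu> \<and> cp L \<mu> (sr L \<mu>) = \<mu>)
   \<and> (\<forall>\<mu>\<in>Mor L. \<forall>\<nu>\<in>Mor L. sr L \<mu> = rg L \<nu> \<longrightarrow>
        cp L \<mu> \<nu> \<in> Mor L \<and> rg L (cp L \<mu> \<nu>) = rg L \<mu> \<and> sr L (cp L \<mu> \<nu>) = sr L \<nu>)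
   \<and> (\<forall>lam\<in>Mor L. \<forall>\<mu>\<in>Mor L. \<forall>\<nu>\<in>Mor L. sr L lam = rg L \<mu> \<longrightarrow> sr L \<mu> = rg L \<nu> \<longrightarrow>
        cp L (cp L lam \<mu>) \<nu> = cp L lam (cp L \<mu> \<nu>))"

definition P_graph :: "('g, 'b) monoid_scheme \<Rightarrow> 'g set \<Rightarrow> ('a, 'g) pgraph \<Rightarrow> bool" where
  "P_graph Q P L \<longleftrightarrow> small_cat L \<and> countable (Mor L)
   \<and> (\<forall>\<mu>\<in>Mor L. dg L \<mu> \<in> P)
   \<and> (\<forall>\<mu>\<in>Mor L. dg L (rg L \<mu>) = \<one>\<^bsub>Q\<^esub>)
   \<and> (\<forall>\<mu>\<in>Mor L. \<forall>\<nu>\<in>Mor L. sr L \<mu> = rg L \<nu> \<longrightarrow> dg L (cp L \<mu> \<nu>) = dg L \<mu> \<otimes>\<^bsub>Q\<^esub> dg L \<nu>)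
   \<and> (\<forall>lam\<in>Mor L. \<forall>p\<in>P. \<forall>q\<in>P. dg L lam = p \<otimes>\<^bsub>Q\<^esub> q \<longrightarrow>
        (\<exists>!(\<mu>, \<nu>). \<mu> \<in> Mor L \<and> \<nu> \<in> Mor L \<and> sr L \<mu> = rg L \<nu> \<and> lam = cp L \<mu> \<nu>
                    \<and> dg L \<mu> = p \<and> dg L \<nu> = q))"

definition ext :: "('a, 'g) pgraph \<Rightarrow> 'a \<Rightarrow> 'a set" where
  "ext L lam = {cp L lam \<mu> | \<mu>. \<mu> \<in> Mor L \<and> sr L lam = rg L \<mu>}"

definition prec :: "('a, 'g) pgraph \<Rightarrow> 'a \<Rightarrow> 'a \<Rightarrow> bool" where
  "prec L \<mu> lam \<longleftrightarrow> lam \<in> ext L \<mu>"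

definition FA :: "('a, 'g) pgraph \<Rightarrow> 'a set" where
  "FA L = {lam \<in> Mor L. \<forall>\<mu>\<in>ext L lam. \<forall>\<nu>\<in>Mor L.
      \<exists>J. finite J \<and> J \<subseteq> Mor L \<and> ext L \<mu> \<inter> ext L \<nu> = (\<Union>\<kappa>\<in>J. ext L \<kappa>)}"

definition is_filter :: "('a, 'g) pgraph \<Rightarrow> 'a set \<Rightarrow> bool" where
  "is_filter L x \<longleftrightarrow> x \<subseteq> Mor L \<and> x \<noteq> {}
     \<and> (\<forall>lam\<in>x. \<forall>\<mu>\<in>Mor L. prec L \<mu> lam \<longrightarrow> \<mu> \<in> x)
     \<and> (\<forall>lam\<in>x. \<forall>\<mu>\<in>x. \<exists>\<nu>\<in>x. prec L lam \<nu> \<and> prec L \<mu> \<nu>)"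

definition Filters :: "('a, 'g) pgraph \<Rightarrow> 'a set set" where
  "Filters L = {x. is_filter L x}"

definition MaxFilters :: "('a, 'g) pgraph \<Rightarrow> 'a set set" where
  "MaxFilters L = {x \<in> Filters L. \<forall>y\<in>Filters L. x \<subseteq> y \<longrightarrow> y = x}"

text \<open>Product topology on P(Lambda) = {0,1}^Lambda, written via its standard subbasis
  of cylinder sets {x. l \<in> x} and {x. l \<notin> x}.\<close>
definition PTop :: "('a, 'g) pgraph \<Rightarrow> 'a set topology" where
  "PTop L = subtopology
     (topology_generated_by (insert UNIV ({{x. l \<in> x} | l. l \<in> Mor L} \<union> {{x. l \<notin> x} | l. l \<in> Mor L})))
     (Pow (Mor L))"

definition XP :: "('a, 'g) pgraph \<Rightarrow> 'a set set" where
  "XP L = {x \<in> Filters L. x \<inter> FA L \<noteq> {}}"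

definition XTop :: "('a, 'g) pgraph \<Rightarrow> 'a set topology" where
  "XTop L = subtopology (PTop L) (XP L)"

definition bdry :: "('a, 'g) pgraph \<Rightarrow> 'a set set" where
  "bdry L = (XTop L) closure_of (MaxFilters L \<inter> XP L)"

definition indom :: "('a, 'g) pgraph \<Rightarrow> 'a set \<Rightarrow> 'g \<Rightarrow> bool" where
  "indom L x m \<longleftrightarrow> (\<exists>lam\<in>x. dg L lam = m)"

definition seg :: "('a, 'g) pgraph \<Rightarrow> 'a set \<Rightarrow> 'g \<Rightarrow> 'a" where
  "seg L x m = (THE lam. lam \<in> x \<and> dg L lam = m)"

definition shift :: "('a, 'g) pgraph \<Rightarrow> 'a set \<Rightarrow> 'g \<Rightarrow> 'a set" where
  "shift L x m = {\<mu> \<in> Mor L. sr L (seg L x m) = rg L \<mu> \<and> cp L (seg L x m) \<mu> \<in> x}"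

definition PG :: "('g, 'b) monoid_scheme \<Rightarrow> 'g set \<Rightarrow> ('a, 'g) pgraph \<Rightarrow> ('a set \<times> 'g \<times> 'a set) set" where
  "PG Q P L = {(x, q, y). x \<in> XP L \<and> y \<in> XP L \<and>
     (\<exists>m\<in>P. \<exists>n\<in>P. q = m \<otimes>\<^bsub>Q\<^esub> inv\<^bsub>Q\<^esub> n \<and> indom L x m \<and> indom L y n \<and> shift L x m = shift L y n)}"

definition GBasic :: "('g, 'b) monoid_scheme \<Rightarrow> 'g set \<Rightarrow> ('a, 'g) pgraph \<Rightarrow> 'g \<Rightarrow> 'g
    \<Rightarrow> 'a set set \<Rightarrow> 'a set set \<Rightarrow> ('a set \<times> 'g \<times> 'a set) set" where
  "GBasic Q P L m n U V = {(x, q, y) \<in> PG Q P L. q = m \<otimes>\<^bsub>Q\<^esub> inv\<^bsub>Q\<^esub> n \<and> x \<in> U \<and> y \<in> V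
      \<and> indom L x m \<and> indom L y n \<and> shift L x m = shift L y n}"

definition GTop :: "('g, 'b) monoid_scheme \<Rightarrow> 'g set \<Rightarrow> ('a, 'g) pgraph \<Rightarrow> ('a set \<times> 'g \<times> 'a set) topology" where
  "GTop Q P L = subtopology
     (topology_generated_by {GBasic Q P L m n U V | m n U V.
        m \<in> P \<and> n \<in> P \<and> openin (XTop L) U \<and> openin (XTop L) V})
     (PG Q P L)"

definition unit_space :: "('g, 'b) monoid_scheme \<Rightarrow> ('a, 'g) pgraph \<Rightarrow> ('a set \<times> 'g \<times> 'a set) set" where
  "unit_space Q L = {(z, \<one>\<^bsub>Q\<^esub>, z) | z. z \<in> XP L}"

definition g_rng :: "('g, 'b) monoid_scheme \<Rightarrow> ('a set \<times> 'g \<times> 'a set) \<Rightarrow> ('a set \<times> 'g \<times> 'a set)" where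
  "g_rng Q g = (case g of (x, q, y) \<Rightarrow> (x, \<one>\<^bsub>Q\<^esub>, x))"

definition g_src :: "('g, 'b) monoid_scheme \<Rightarrow> ('a set \<times> 'g \<times> 'a set) \<Rightarrow> ('a set \<times> 'g \<times> 'a set)" where
  "g_src Q g = (case g of (x, q, y) \<Rightarrow> (y, \<one>\<^bsub>Q\<^esub>, y))"

definition invariant :: "('g, 'b) monoid_scheme \<Rightarrow> ('a set \<times> 'g \<times> 'a set) set
    \<Rightarrow> ('a set \<times> 'g \<times> 'a set) set \<Rightarrow> bool" where
  "invariant Q G U \<longleftrightarrow> g_rng Q ` {g \<in> G. g_src Q g \<in> U} \<subseteq> U"

definition unit_map :: "('g, 'b) monoid_scheme \<Rightarrow> 'a set \<Rightarrow> ('a set \<times> 'g \<times> 'a set)" where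
  "unit_map Q z = (z, \<one>\<^bsub>Q\<^esub>, z)"

end

theory Submission
  imports Defs
begin

(* Closedness: the projection (x, q, y) \<mapsto> x is continuous on the groupoid, so the image
   of the closed set bdry L under z \<mapsto> (z, e, z) is the trace on the unit space of a closed
   set.

   Invariance: let (x, q, y) be in the groupoid with y in the boundary. Extending x(0,m) inside
   x to a path \<alpha> lying above some \<zeta> in x \<inter> FA(\<Lambda>), and y(0,n) by the same path to \<beta>,
   gives x\<cdot>\<alpha> = y\<cdot>\<beta>: x arises from y by replacing the prefix \<beta> with \<alpha>. This
   replacement is continuous on the open set of filters through \<beta> and maps maximal filters
   to maximal filters (replacing \<alpha> by \<beta> undoes it), so it maps the boundary paths through
   \<beta> into the boundary. *)

definition cylinders :: "('a, 'g) pgraph \<Rightarrow> 'a set set set" where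
  "cylinders L = insert UNIV ({{x. l \<in> x} | l. l \<in> Mor L} \<union> {{x. l \<notin> x} | l. l \<in> Mor L})"

abbreviation cylinder_topology :: "('a, 'g) pgraph \<Rightarrow> 'a set topology" where
  "cylinder_topology L \<equiv> topology_generated_by (cylinders L)"

lemma topspace_cylinder_topology: "topspace (cylinder_topology L) = UNIV"
  unfolding cylinders_def by auto

lemma openin_cylinder_mem: "l \<in> Mor L \<Longrightarrow> openin (cylinder_topology L) {x. l \<in> x}"
  by (rule topology_generated_by_Basis) (auto simp: cylinders_def)

lemma openin_cylinder_not_mem: "l \<in> Mor L \<Longrightarrow> openin (cylinder_topology L) {x. l \<notin> x}"
  by (rule topology_generated_by_Basis) (auto simp: cylinders_def)

lemma continuous_map_into_cylinder_topology:
  assumes "\<And>l. l \<in> Mor L \<Longrightarrow> openin X {w \<in> topspace X. l \<in> f w}"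
    and "\<And>l. l \<in> Mor L \<Longrightarrow> openin X {w \<in> topspace X. l \<notin> f w}"
  shows "continuous_map X (cylinder_topology L) f"
proof (rule continuous_on_generated_topo)
  fix U assume "U \<in> cylinders L"
  then consider "U = UNIV" | l where "l \<in> Mor L" "U = {x. l \<in> x}"
    | l where "l \<in> Mor L" "U = {x. l \<notin> x}"
    unfolding cylinders_def by blast
  then show "openin X (f -` U \<inter> topspace X)"
  proof cases
    case 1
    then show ?thesis by simp
  next
    case (2 l)
    then have "f -` U \<inter> topspace X = {w \<in> topspace X. l \<in> f w}" by blast
    then show ?thesis using assms(1) 2 by simp
  next
    case (3 l)
    then have "f -` U \<inter> topspace X = {w \<in> topspace X. l \<notin> f w}" by blast
    then show ?thesis using assms(2) 3 by simp
  qed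
qed (auto simp: cylinders_def)

lemma XP_subset_Pow: "XP L \<subseteq> Pow (Mor L)"
  unfolding XP_def Filters_def is_filter_def by auto

lemma is_filter_XP: "x \<in> XP L \<Longrightarrow> is_filter L x"
  unfolding XP_def Filters_def by blast

lemma XTop_eq_subtopology: "XTop L = subtopology (cylinder_topology L) (XP L)"
proof -
  have "Pow (Mor L) \<inter> XP L = XP L" using XP_subset_Pow by blast
  then show ?thesis unfolding XTop_def PTop_def cylinders_def subtopology_subtopology by simp
qed

lemma topspace_XTop [simp]: "topspace (XTop L) = XP L"
  unfolding XTop_eq_subtopology by (auto simp: cylinders_def)

lemma bdry_subset_XP: "bdry L \<subseteq> XP L"
  unfolding bdry_def using closure_of_subset_topspace topspace_XTop by metis

lemma closedin_bdry: "closedin (XTop L) (bdry L)"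
  unfolding bdry_def by (rule closedin_closure_of)

lemma PG_mem_GBasic:
  assumes "(x, q, y) \<in> PG Q P L" "x \<in> U" "y \<in> V"
  obtains m n where "m \<in> P" "n \<in> P" "(x, q, y) \<in> GBasic Q P L m n U V"
proof -
  obtain m n where "m \<in> P" "n \<in> P" "q = m \<otimes>\<^bsub>Q\<^esub> inv\<^bsub>Q\<^esub> n"
    "indom L x m" "indom L y n" "shift L x m = shift L y n"
    using assms(1) unfolding PG_def by blast
  with assms that show thesis unfolding GBasic_def by blast
qed

lemma topspace_GTop: "topspace (GTop Q P L) = PG Q P L"
proof -
  have "PG Q P L \<subseteq> \<Union>{GBasic Q P L m n U V | m n U V.
      m \<in> P \<and> n \<in> P \<and> openin (XTop L) U \<and> openin (XTop L) V}"
  proof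
    fix g assume g: "g \<in> PG Q P L"
    obtain x q y where xqy: "g = (x, q, y)" by (cases g)
    with g have "x \<in> XP L" "y \<in> XP L" unfolding PG_def by auto
    with g xqy obtain m n where "m \<in> P" "n \<in> P" "g \<in> GBasic Q P L m n (XP L) (XP L)"
      using PG_mem_GBasic[of x q y Q P L "XP L" "XP L"] by blast
    moreover have "openin (XTop L) (XP L)"
      using openin_topspace[of "XTop L"] by simp
    ultimately show "g \<in> \<Union>{GBasic Q P L m n U V | m n U V.
        m \<in> P \<and> n \<in> P \<and> openin (XTop L) U \<and> openin (XTop L) V}"
      by blast
  qed
  then show ?thesis unfolding GTop_def topspace_subtopology topology_generated_by_topspace by blast
qed

lemma continuous_map_fst_GTop: "continuous_map (GTop Q P L) (XTop L) fst"
  unfolding continuous_map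
proof (intro conjI allI impI)
  show "fst ` topspace (GTop Q P L) \<subseteq> topspace (XTop L)"
    unfolding topspace_GTop PG_def by auto
  fix U assume U: "openin (XTop L) U"
  define T where "T = \<Union>{GBasic Q P L m n U (XP L) | m n. m \<in> P \<and> n \<in> P}"
  have "openin (topology_generated_by {GBasic Q P L m n U V | m n U V.
      m \<in> P \<and> n \<in> P \<and> openin (XTop L) U \<and> openin (XTop L) V}) T"
    unfolding T_def using U openin_topspace[of "XTop L"]
    by (intro openin_Union topology_generated_by_Basis) auto
  moreover have "{g \<in> topspace (GTop Q P L). fst g \<in> U} = T \<inter> PG Q P L"
  proof
    show "{g \<in> topspace (GTop Q P L). fst g \<in> U} \<subseteq> T \<inter> PG Q P L"
    proof
      fix g assume g: "g \<in> {g \<in> topspace (GTop Q P L). fst g \<in> U}"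
      obtain x q y where xqy: "g = (x, q, y)" by (cases g)
      with g have "g \<in> PG Q P L" "x \<in> U" "y \<in> XP L"
        unfolding topspace_GTop PG_def by auto
      with xqy obtain m n where "m \<in> P" "n \<in> P" "g \<in> GBasic Q P L m n U (XP L)"
        using PG_mem_GBasic[of x q y Q P L U "XP L"] by blast
      with \<open>g \<in> PG Q P L\<close> show "g \<in> T \<inter> PG Q P L" unfolding T_def by blast
    qed
    show "T \<inter> PG Q P L \<subseteq> {g \<in> topspace (GTop Q P L). fst g \<in> U}"
      unfolding T_def GBasic_def topspace_GTop by auto
  qed
  ultimately show "openin (GTop Q P L) {g \<in> topspace (GTop Q P L). fst g \<in> U}"
    unfolding GTop_def openin_subtopology by blast
qed

definition replace_prefix :: "('a, 'g) pgraph \<Rightarrow> 'a \<Rightarrow> 'a \<Rightarrow> 'a set \<Rightarrow> 'a set" where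
  "replace_prefix L \<alpha> \<beta> w =
     {\<nu> \<in> Mor L. \<exists>\<rho>\<in>Mor L. sr L \<alpha> = rg L \<rho> \<and> cp L \<beta> \<rho> \<in> w \<and> prec L \<nu> (cp L \<alpha> \<rho>)}"

locale wqlo_P_graph =
  fixes Q :: "('g, 'b) monoid_scheme" and P :: "'g set" and L :: "('a, 'g) pgraph"
  assumes wqlo: "wqlo Q P" and P_graph: "P_graph Q P L"
begin

lemma group: "group Q" and P_subset_carrier: "P \<subseteq> carrier Q" and one_in_P: "\<one>\<^bsub>Q\<^esub> \<in> P"
  using wqlo unfolding wqlo_def by blast+

lemma mult_left_cancel:
  "x \<in> carrier Q \<Longrightarrow> y \<in> carrier Q \<Longrightarrow> z \<in> carrier Q \<Longrightarrow> x \<otimes>\<^bsub>Q\<^esub> y = x \<otimes>\<^bsub>Q\<^esub> z \<Longrightarrow> y = z"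
  using monoid.Units_l_cancel[OF group.is_monoid[OF group]] group.Units_eq[OF group] by blast

lemma small_cat: "small_cat L"
  using P_graph unfolding P_graph_def by auto

lemma
  assumes "\<mu> \<in> Mor L"
  shows rg_Mor: "rg L \<mu> \<in> Mor L" and sr_Mor: "sr L \<mu> \<in> Mor L"
    and sr_rg: "sr L (rg L \<mu>) = rg L \<mu>" and rg_sr: "rg L (sr L \<mu>) = sr L \<mu>"
    and cp_rg: "cp L (rg L \<mu>) \<mu> = \<mu>" and cp_sr: "cp L \<mu> (sr L \<mu>) = \<mu>"
  using small_cat assms unfolding small_cat_def by simp_all

lemma
  assumes "\<mu> \<in> Mor L" "\<nu> \<in> Mor L" "sr L \<mu> = rg L \<nu>"
  shows cp_Mor: "cp L \<mu> \<nu> \<in> Mor L" and rg_cp: "rg L (cp L \<mu> \<nu>) = rg L \<mu>"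
    and sr_cp: "sr L (cp L \<mu> \<nu>) = sr L \<nu>"
  using small_cat assms unfolding small_cat_def by simp_all

lemma cp_assoc:
  assumes "\<theta> \<in> Mor L" "\<mu> \<in> Mor L" "\<nu> \<in> Mor L" "sr L \<theta> = rg L \<mu>" "sr L \<mu> = rg L \<nu>"
  shows "cp L (cp L \<theta> \<mu>) \<nu> = cp L \<theta> (cp L \<mu> \<nu>)"
  using small_cat assms unfolding small_cat_def by simp

lemma dg_in_P: "\<mu> \<in> Mor L \<Longrightarrow> dg L \<mu> \<in> P"
  using P_graph unfolding P_graph_def by blast

lemma dg_in_carrier: "\<mu> \<in> Mor L \<Longrightarrow> dg L \<mu> \<in> carrier Q"
  using dg_in_P P_subset_carrier by auto

lemma dg_rg: "\<mu> \<in> Mor L \<Longrightarrow> dg L (rg L \<mu>) = \<one>\<^bsub>Q\<^esub>"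
  using P_graph unfolding P_graph_def by blast

lemma dg_cp: "\<mu> \<in> Mor L \<Longrightarrow> \<nu> \<in> Mor L \<Longrightarrow> sr L \<mu> = rg L \<nu> \<Longrightarrow> dg L (cp L \<mu> \<nu>) = dg L \<mu> \<otimes>\<^bsub>Q\<^esub> dg L \<nu>"
  using P_graph unfolding P_graph_def by blast

lemma unique_factorisation:
  assumes "\<mu> \<in> Mor L" "\<nu> \<in> Mor L" "\<mu>' \<in> Mor L" "\<nu>' \<in> Mor L" "sr L \<mu> = rg L \<nu>" "sr L \<mu>' = rg L \<nu>'"
    and "cp L \<mu> \<nu> = cp L \<mu>' \<nu>'" "dg L \<mu> = dg L \<mu>'" "dg L \<nu> = dg L \<nu>'"
  shows "\<mu> = \<mu>' \<and> \<nu> = \<nu>'"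
proof -
  let ?\<theta> = "cp L \<mu> \<nu>"
  have "?\<theta> \<in> Mor L" "dg L ?\<theta> = dg L \<mu> \<otimes>\<^bsub>Q\<^esub> dg L \<nu>"
    using cp_Mor dg_cp assms by auto
  then have "\<exists>!(\<kappa>, \<tau>). \<kappa> \<in> Mor L \<and> \<tau> \<in> Mor L \<and> sr L \<kappa> = rg L \<tau> \<and> ?\<theta> = cp L \<kappa> \<tau>
      \<and> dg L \<kappa> = dg L \<mu> \<and> dg L \<tau> = dg L \<nu>"
    using P_graph dg_in_P assms unfolding P_graph_def by blast
  then show ?thesis
    using assms by (metis (mono_tags, lifting) case_prodI prod.inject)
qed

lemma cp_left_cancel:
  assumes "\<alpha> \<in> Mor L" "\<mu> \<in> Mor L" "\<nu> \<in> Mor L" "sr L \<alpha> = rg L \<mu>" "sr L \<alpha> = rg L \<nu>"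
    and "cp L \<alpha> \<mu> = cp L \<alpha> \<nu>"
  shows "\<mu> = \<nu>"
proof -
  have "dg L \<alpha> \<otimes>\<^bsub>Q\<^esub> dg L \<mu> = dg L \<alpha> \<otimes>\<^bsub>Q\<^esub> dg L \<nu>"
    using dg_cp assms by metis
  then have "dg L \<mu> = dg L \<nu>"
    using mult_left_cancel dg_in_carrier assms by blast
  then show ?thesis using unique_factorisation assms by blast
qed

lemma prefix_unique_by_dg:
  assumes "\<alpha> \<in> Mor L" "\<alpha>' \<in> Mor L" "\<mu> \<in> Mor L" "\<mu>' \<in> Mor L" "sr L \<alpha> = rg L \<mu>" "sr L \<alpha>' = rg L \<mu>'"
    and "cp L \<alpha> \<mu> = cp L \<alpha>' \<mu>'" "dg L \<alpha> = dg L \<alpha>'"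
  shows "\<alpha> = \<alpha>'"
proof -
  have "dg L \<alpha> \<otimes>\<^bsub>Q\<^esub> dg L \<mu> = dg L \<alpha> \<otimes>\<^bsub>Q\<^esub> dg L \<mu>'"
    using dg_cp assms by metis
  then have "dg L \<mu> = dg L \<mu>'"
    using mult_left_cancel dg_in_carrier assms by blast
  then show ?thesis using unique_factorisation assms by blast
qed

lemma prec_iff: "prec L \<mu> \<theta> \<longleftrightarrow> (\<exists>\<rho>\<in>Mor L. sr L \<mu> = rg L \<rho> \<and> \<theta> = cp L \<mu> \<rho>)"
  unfolding prec_def ext_def by auto

lemma prec_refl: "\<mu> \<in> Mor L \<Longrightarrow> prec L \<mu> \<mu>"
  unfolding prec_iff using sr_Mor rg_sr cp_sr by metis

lemma prec_rg: "\<mu> \<in> Mor L \<Longrightarrow> prec L (rg L \<mu>) \<mu>"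
  unfolding prec_iff using rg_Mor sr_rg cp_rg by metis

lemma prec_cp: "\<mu> \<in> Mor L \<Longrightarrow> \<rho> \<in> Mor L \<Longrightarrow> sr L \<mu> = rg L \<rho> \<Longrightarrow> prec L \<mu> (cp L \<mu> \<rho>)"
  unfolding prec_iff by auto

lemma prec_trans:
  assumes "\<theta> \<in> Mor L" "prec L \<theta> \<mu>" "prec L \<mu> \<nu>"
  shows "prec L \<theta> \<nu>"
proof -
  obtain \<sigma> where \<sigma>: "\<sigma> \<in> Mor L" "sr L \<theta> = rg L \<sigma>" "\<mu> = cp L \<theta> \<sigma>"
    using assms prec_iff by blast
  obtain \<tau> where \<tau>: "\<tau> \<in> Mor L" "sr L \<mu> = rg L \<tau>" "\<nu> = cp L \<mu> \<tau>"
    using assms prec_iff by blast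
  have "sr L \<sigma> = rg L \<tau>" using \<sigma> \<tau> sr_cp assms by auto
  then have "\<nu> = cp L \<theta> (cp L \<sigma> \<tau>)" "cp L \<sigma> \<tau> \<in> Mor L" "sr L \<theta> = rg L (cp L \<sigma> \<tau>)"
    using cp_assoc cp_Mor rg_cp \<sigma> \<tau> assms by auto
  then show ?thesis unfolding prec_iff by blast
qed

lemma prec_cp_cp:
  assumes "\<alpha> \<in> Mor L" "\<rho>' \<in> Mor L" "sr L \<alpha> = rg L \<rho>'" "prec L \<rho>' \<rho>"
  shows "prec L (cp L \<alpha> \<rho>') (cp L \<alpha> \<rho>)"
proof -
  obtain \<sigma> where \<sigma>: "\<sigma> \<in> Mor L" "sr L \<rho>' = rg L \<sigma>" "\<rho> = cp L \<rho>' \<sigma>"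
    using assms prec_iff by blast
  then have "cp L \<alpha> \<rho> = cp L (cp L \<alpha> \<rho>') \<sigma>" "sr L (cp L \<alpha> \<rho>') = rg L \<sigma>" "cp L \<alpha> \<rho>' \<in> Mor L"
    using cp_assoc sr_cp cp_Mor assms by auto
  then show ?thesis using prec_iff \<sigma> by auto
qed

lemma prec_cp_cp_cancel:
  assumes "\<alpha> \<in> Mor L" "\<rho>' \<in> Mor L" "\<rho> \<in> Mor L" "sr L \<alpha> = rg L \<rho>'" "sr L \<alpha> = rg L \<rho>"
    and "prec L (cp L \<alpha> \<rho>') (cp L \<alpha> \<rho>)"
  shows "prec L \<rho>' \<rho>"
proof -
  obtain \<sigma> where \<sigma>: "\<sigma> \<in> Mor L" "sr L (cp L \<alpha> \<rho>') = rg L \<sigma>" "cp L \<alpha> \<rho> = cp L (cp L \<alpha> \<rho>') \<sigma>"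
    using assms prec_iff by blast
  have "sr L \<rho>' = rg L \<sigma>" using \<sigma> sr_cp assms by simp
  then have "cp L \<alpha> \<rho> = cp L \<alpha> (cp L \<rho>' \<sigma>)" "cp L \<rho>' \<sigma> \<in> Mor L" "sr L \<alpha> = rg L (cp L \<rho>' \<sigma>)"
    using cp_assoc cp_Mor rg_cp \<sigma> assms by auto
  then have "\<rho> = cp L \<rho>' \<sigma>" using cp_left_cancel assms by metis
  then show ?thesis using prec_iff \<sigma> \<open>sr L \<rho>' = rg L \<sigma>\<close> by auto
qed

lemma
  assumes "is_filter L x"
  shows is_filter_subset_Mor: "x \<subseteq> Mor L" and is_filter_nonempty: "x \<noteq> {}"
    and is_filter_hereditary: "\<theta> \<in> x \<Longrightarrow> \<mu> \<in> Mor L \<Longrightarrow> prec L \<mu> \<theta> \<Longrightarrow> \<mu> \<in> x"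
    and is_filter_directed: "\<theta> \<in> x \<Longrightarrow> \<mu> \<in> x \<Longrightarrow> \<exists>\<nu>\<in>x. prec L \<theta> \<nu> \<and> prec L \<mu> \<nu>"
  using assms unfolding is_filter_def by blast+

lemma is_filter_extend_prefix:
  assumes "is_filter L x" "\<alpha> \<in> x" "\<nu> \<in> x"
  obtains \<rho> where "\<rho> \<in> Mor L" "sr L \<alpha> = rg L \<rho>" "cp L \<alpha> \<rho> \<in> x" "prec L \<nu> (cp L \<alpha> \<rho>)"
  using is_filter_directed[OF assms] prec_iff by metis

lemma seg_eq:
  assumes "is_filter L x" "\<theta> \<in> x" "dg L \<theta> = m"
  shows "seg L x m = \<theta>"
  unfolding seg_def
proof (rule the_equality)
  fix \<theta>' assume \<theta>': "\<theta>' \<in> x \<and> dg L \<theta>' = m"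
  obtain \<tau> where "\<tau> \<in> x" "prec L \<theta> \<tau>" "prec L \<theta>' \<tau>"
    using is_filter_directed[OF assms(1,2)] \<theta>' by blast
  then obtain \<sigma> \<sigma>' where "\<sigma> \<in> Mor L" "sr L \<theta> = rg L \<sigma>" "\<tau> = cp L \<theta> \<sigma>"
    and "\<sigma>' \<in> Mor L" "sr L \<theta>' = rg L \<sigma>'" "\<tau> = cp L \<theta>' \<sigma>'"
    using prec_iff by metis
  moreover have "\<theta> \<in> Mor L" "\<theta>' \<in> Mor L"
    using is_filter_subset_Mor[OF assms(1)] assms(2) \<theta>' by auto
  ultimately show "\<theta>' = \<theta>" using prefix_unique_by_dg[of \<theta>' \<theta> \<sigma>' \<sigma>] \<theta>' assms by simp
qed (use assms in simp)

lemma replace_prefix_self: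
  assumes "is_filter L x" "\<alpha> \<in> x"
  shows "replace_prefix L \<alpha> \<alpha> x = x"
proof
  show "replace_prefix L \<alpha> \<alpha> x \<subseteq> x"
    unfolding replace_prefix_def using is_filter_hereditary[OF assms(1)] by blast
  show "x \<subseteq> replace_prefix L \<alpha> \<alpha> x"
    unfolding replace_prefix_def
    using is_filter_extend_prefix[OF assms] is_filter_subset_Mor[OF assms(1)] by blast
qed

lemma cp_in_replace_prefix:
  assumes "\<alpha> \<in> Mor L" "\<rho> \<in> Mor L" "sr L \<alpha> = rg L \<rho>" "cp L \<beta> \<rho> \<in> w"
  shows "cp L \<alpha> \<rho> \<in> replace_prefix L \<alpha> \<beta> w"
  unfolding replace_prefix_def using assms cp_Mor prec_refl by blast

lemma
  assumes "\<alpha> \<in> Mor L" "\<beta> \<in> Mor L" "sr L \<alpha> = sr L \<beta>" "is_filter L w" "\<beta> \<in> w"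
  shows is_filter_replace_prefix: "is_filter L (replace_prefix L \<alpha> \<beta> w)"
    and prefix_in_replace_prefix: "\<alpha> \<in> replace_prefix L \<alpha> \<beta> w"
proof -
  have "cp L \<alpha> (sr L \<alpha>) \<in> replace_prefix L \<alpha> \<beta> w"
    using cp_in_replace_prefix[of \<alpha> "sr L \<alpha>"] sr_Mor rg_sr cp_sr assms by simp
  then show \<alpha>: "\<alpha> \<in> replace_prefix L \<alpha> \<beta> w"
    using cp_sr assms(1) by simp
  have directed: "\<exists>\<nu>\<in>replace_prefix L \<alpha> \<beta> w. prec L \<nu>\<^sub>1 \<nu> \<and> prec L \<nu>\<^sub>2 \<nu>"
    if \<nu>: "\<nu>\<^sub>1 \<in> replace_prefix L \<alpha> \<beta> w" "\<nu>\<^sub>2 \<in> replace_prefix L \<alpha> \<beta> w" for \<nu>\<^sub>1 \<nu>\<^sub>2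
  proof -
    obtain \<rho>\<^sub>1 \<rho>\<^sub>2 where \<rho>: "\<nu>\<^sub>1 \<in> Mor L" "\<rho>\<^sub>1 \<in> Mor L" "sr L \<alpha> = rg L \<rho>\<^sub>1" "cp L \<beta> \<rho>\<^sub>1 \<in> w"
      "prec L \<nu>\<^sub>1 (cp L \<alpha> \<rho>\<^sub>1)" "\<nu>\<^sub>2 \<in> Mor L" "\<rho>\<^sub>2 \<in> Mor L" "sr L \<alpha> = rg L \<rho>\<^sub>2" "cp L \<beta> \<rho>\<^sub>2 \<in> w"
      "prec L \<nu>\<^sub>2 (cp L \<alpha> \<rho>\<^sub>2)"
      using \<nu> unfolding replace_prefix_def by blast
    obtain \<tau> where \<tau>: "\<tau> \<in> w" "prec L (cp L \<beta> \<rho>\<^sub>1) \<tau>" "prec L (cp L \<beta> \<rho>\<^sub>2) \<tau>"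
      using is_filter_directed[OF assms(4)] \<rho> by blast
    then have "prec L \<beta> \<tau>" using prec_trans prec_cp \<rho> assms by metis
    then obtain \<rho> where \<rho>': "\<rho> \<in> Mor L" "sr L \<beta> = rg L \<rho>" "\<tau> = cp L \<beta> \<rho>"
      using prec_iff by blast
    have "prec L \<rho>\<^sub>1 \<rho>" "prec L \<rho>\<^sub>2 \<rho>"
      using prec_cp_cp_cancel[of \<beta>] \<rho> \<rho>' \<tau> assms by simp_all
    then have "prec L (cp L \<alpha> \<rho>\<^sub>1) (cp L \<alpha> \<rho>)" "prec L (cp L \<alpha> \<rho>\<^sub>2) (cp L \<alpha> \<rho>)"
      using prec_cp_cp \<rho> assms by simp_all
    then have "prec L \<nu>\<^sub>1 (cp L \<alpha> \<rho>)" "prec L \<nu>\<^sub>2 (cp L \<alpha> \<rho>)"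
      using prec_trans \<rho> by blast+
    moreover have "cp L \<alpha> \<rho> \<in> replace_prefix L \<alpha> \<beta> w"
      using cp_in_replace_prefix \<rho>' \<tau> assms by simp
    ultimately show ?thesis by blast
  qed
  show "is_filter L (replace_prefix L \<alpha> \<beta> w)"
    unfolding is_filter_def
  proof (intro conjI ballI impI)
    fix \<theta> \<mu> assume "\<theta> \<in> replace_prefix L \<alpha> \<beta> w" "\<mu> \<in> Mor L" "prec L \<mu> \<theta>"
    then show "\<mu> \<in> replace_prefix L \<alpha> \<beta> w"
      unfolding replace_prefix_def using prec_trans by blast
  qed (use \<alpha> directed in \<open>auto simp: replace_prefix_def\<close>)
qed

lemma subset_replace_prefix:
  assumes "is_filter L w" "\<beta> \<in> w" "\<alpha> \<in> Mor L" "sr L \<alpha> = sr L \<beta>"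
    and "\<And>\<rho>. \<rho> \<in> Mor L \<Longrightarrow> sr L \<beta> = rg L \<rho> \<Longrightarrow> cp L \<beta> \<rho> \<in> w \<Longrightarrow> cp L \<alpha> \<rho> \<in> z"
  shows "w \<subseteq> replace_prefix L \<beta> \<alpha> z"
proof
  fix \<nu> assume "\<nu> \<in> w"
  then obtain \<rho> where "\<rho> \<in> Mor L" "sr L \<beta> = rg L \<rho>" "cp L \<beta> \<rho> \<in> w" "prec L \<nu> (cp L \<beta> \<rho>)"
    using is_filter_extend_prefix[OF assms(1,2)] by blast
  with \<open>\<nu> \<in> w\<close> show "\<nu> \<in> replace_prefix L \<beta> \<alpha> z"
    unfolding replace_prefix_def using is_filter_subset_Mor[OF assms(1)] assms by auto
qed

lemma replace_prefix_MaxFilters: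
  assumes "\<alpha> \<in> Mor L" "\<beta> \<in> Mor L" "sr L \<alpha> = sr L \<beta>" "w \<in> MaxFilters L" "\<beta> \<in> w"
  shows "replace_prefix L \<alpha> \<beta> w \<in> MaxFilters L"
proof -
  have w: "is_filter L w" and w_max: "\<And>y. is_filter L y \<Longrightarrow> w \<subseteq> y \<Longrightarrow> y = w"
    using assms unfolding MaxFilters_def Filters_def by blast+
  have filter: "is_filter L (replace_prefix L \<alpha> \<beta> w)" and "\<alpha> \<in> replace_prefix L \<alpha> \<beta> w"
    using is_filter_replace_prefix prefix_in_replace_prefix assms w by blast+
  have "z = replace_prefix L \<alpha> \<beta> w" if z: "is_filter L z" "replace_prefix L \<alpha> \<beta> w \<subseteq> z" for z
  proof
    have "\<alpha> \<in> z" using \<open>\<alpha> \<in> replace_prefix L \<alpha> \<beta> w\<close> z by blast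
    have "w \<subseteq> replace_prefix L \<beta> \<alpha> z"
    proof (rule subset_replace_prefix[OF w assms(5,1,3)])
      fix \<rho> assume "\<rho> \<in> Mor L" "sr L \<beta> = rg L \<rho>" "cp L \<beta> \<rho> \<in> w"
      then show "cp L \<alpha> \<rho> \<in> z"
        using cp_in_replace_prefix[OF assms(1)] assms(3) z(2) by auto
    qed
    then have w_eq: "replace_prefix L \<beta> \<alpha> z = w"
      using w_max is_filter_replace_prefix[OF assms(2,1) _ z(1) \<open>\<alpha> \<in> z\<close>] assms(3) by simp
    show "z \<subseteq> replace_prefix L \<alpha> \<beta> w"
    proof (rule subset_replace_prefix[OF z(1) \<open>\<alpha> \<in> z\<close> assms(2)])
      fix \<rho> assume "\<rho> \<in> Mor L" "sr L \<alpha> = rg L \<rho>" "cp L \<alpha> \<rho> \<in> z"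
      then show "cp L \<beta> \<rho> \<in> w"
        using cp_in_replace_prefix[OF assms(2)] assms(3) w_eq by auto
    qed (use assms(3) in simp)
  qed (use z in blast)
  then show ?thesis using filter unfolding MaxFilters_def Filters_def by auto
qed

lemma openin_mem_replace_prefix:
  assumes "\<beta> \<in> Mor L" "sr L \<alpha> = sr L \<beta>"
  shows "openin (cylinder_topology L) {w. \<nu> \<in> replace_prefix L \<alpha> \<beta> w}"
proof -
  have "{w. \<nu> \<in> replace_prefix L \<alpha> \<beta> w} = \<Union>{{w. cp L \<beta> \<rho> \<in> w} | \<rho>.
      \<nu> \<in> Mor L \<and> \<rho> \<in> Mor L \<and> sr L \<alpha> = rg L \<rho> \<and> prec L \<nu> (cp L \<alpha> \<rho>)}"
    unfolding replace_prefix_def by blast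
  moreover have "cp L \<beta> \<rho> \<in> Mor L" if "\<rho> \<in> Mor L" "sr L \<alpha> = rg L \<rho>" for \<rho>
    using cp_Mor that assms by simp
  ultimately show ?thesis
    by (auto intro!: openin_Union openin_cylinder_mem)
qed

lemma mem_replace_prefix_iff:
  assumes "\<alpha> \<in> Mor L" "\<beta> \<in> Mor L" "\<nu> \<in> Mor L" "sr L \<alpha> = sr L \<beta>" "is_filter L w"
    and "J \<subseteq> Mor L" "ext L \<alpha> \<inter> ext L \<nu> = (\<Union>\<kappa>\<in>J. ext L \<kappa>)"
  shows "\<nu> \<in> replace_prefix L \<alpha> \<beta> w \<longleftrightarrow>
    (\<exists>\<kappa>\<in>J. \<exists>\<rho>\<in>Mor L. sr L \<alpha> = rg L \<rho> \<and> \<kappa> = cp L \<alpha> \<rho> \<and> cp L \<beta> \<rho> \<in> w)"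
proof
  assume "\<nu> \<in> replace_prefix L \<alpha> \<beta> w"
  then obtain \<rho> where \<rho>: "\<rho> \<in> Mor L" "sr L \<alpha> = rg L \<rho>" "cp L \<beta> \<rho> \<in> w" "prec L \<nu> (cp L \<alpha> \<rho>)"
    unfolding replace_prefix_def by blast
  then have "cp L \<alpha> \<rho> \<in> ext L \<alpha> \<inter> ext L \<nu>"
    using prec_cp assms unfolding prec_def by blast
  then obtain \<kappa> where \<kappa>: "\<kappa> \<in> J" "prec L \<kappa> (cp L \<alpha> \<rho>)"
    using assms(7) unfolding prec_def by blast
  have "\<kappa> \<in> ext L \<alpha>"
    using prec_refl \<kappa>(1) assms(6,7) unfolding prec_def by blast
  then obtain \<rho>' where \<rho>': "\<rho>' \<in> Mor L" "sr L \<alpha> = rg L \<rho>'" "\<kappa> = cp L \<alpha> \<rho>'"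
    using prec_iff unfolding prec_def by blast
  have "prec L (cp L \<beta> \<rho>') (cp L \<beta> \<rho>)"
    using prec_cp_cp_cancel[of \<alpha> \<rho>' \<rho>] prec_cp_cp[of \<beta> \<rho>' \<rho>] \<rho> \<rho>' \<kappa> assms by simp
  then have "cp L \<beta> \<rho>' \<in> w"
    using is_filter_hereditary[OF assms(5) \<rho>(3)] cp_Mor \<rho>' assms by simp
  then show "\<exists>\<kappa>\<in>J. \<exists>\<rho>\<in>Mor L. sr L \<alpha> = rg L \<rho> \<and> \<kappa> = cp L \<alpha> \<rho> \<and> cp L \<beta> \<rho> \<in> w"
    using \<kappa>(1) \<rho>' by blast
next
  assume "\<exists>\<kappa>\<in>J. \<exists>\<rho>\<in>Mor L. sr L \<alpha> = rg L \<rho> \<and> \<kappa> = cp L \<alpha> \<rho> \<and> cp L \<beta> \<rho> \<in> w"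
  then obtain \<kappa> \<rho> where \<kappa>: "\<kappa> \<in> J" "\<rho> \<in> Mor L" "sr L \<alpha> = rg L \<rho>" "\<kappa> = cp L \<alpha> \<rho>"
    "cp L \<beta> \<rho> \<in> w"
    by blast
  have "prec L \<nu> \<kappa>"
    using prec_refl \<kappa>(1) assms(6,7) unfolding prec_def by blast
  then show "\<nu> \<in> replace_prefix L \<alpha> \<beta> w"
    unfolding replace_prefix_def using \<kappa> assms(3) by blast
qed

lemma openin_no_cp_preimage:
  assumes "\<alpha> \<in> Mor L" "\<beta> \<in> Mor L" "sr L \<alpha> = sr L \<beta>"
  shows "openin (cylinder_topology L)
    {w. \<forall>\<rho>\<in>Mor L. sr L \<alpha> = rg L \<rho> \<and> \<kappa> = cp L \<alpha> \<rho> \<longrightarrow> cp L \<beta> \<rho> \<notin> w}"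
proof (cases "\<exists>\<rho>\<in>Mor L. sr L \<alpha> = rg L \<rho> \<and> \<kappa> = cp L \<alpha> \<rho>")
  case True
  then obtain \<rho> where \<rho>: "\<rho> \<in> Mor L" "sr L \<alpha> = rg L \<rho>" "\<kappa> = cp L \<alpha> \<rho>" by blast
  then have "{w. \<forall>\<rho>\<in>Mor L. sr L \<alpha> = rg L \<rho> \<and> \<kappa> = cp L \<alpha> \<rho> \<longrightarrow> cp L \<beta> \<rho> \<notin> w}
      = {w. cp L \<beta> \<rho> \<notin> w}"
    using cp_left_cancel[OF assms(1)] by blast
  moreover have "cp L \<beta> \<rho> \<in> Mor L" using cp_Mor \<rho> assms by simp
  ultimately show ?thesis using openin_cylinder_not_mem by simp
next
  case False
  then have "{w. \<forall>\<rho>\<in>Mor L. sr L \<alpha> = rg L \<rho> \<and> \<kappa> = cp L \<alpha> \<rho> \<longrightarrow> cp L \<beta> \<rho> \<notin> w}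
      = topspace (cylinder_topology L)"
    unfolding topspace_cylinder_topology by auto
  then show ?thesis by (metis openin_topspace)
qed

lemma openin_not_mem_replace_prefix:
  assumes "\<alpha> \<in> Mor L" "\<beta> \<in> Mor L" "\<nu> \<in> Mor L" "sr L \<alpha> = sr L \<beta>"
    and "finite J" "J \<subseteq> Mor L" "ext L \<alpha> \<inter> ext L \<nu> = (\<Union>\<kappa>\<in>J. ext L \<kappa>)"
  obtains V where "openin (cylinder_topology L) V"
    "\<And>w. is_filter L w \<Longrightarrow> w \<in> V \<longleftrightarrow> \<nu> \<notin> replace_prefix L \<alpha> \<beta> w"
proof
  let ?V = "\<Inter>\<kappa>\<in>J. {w. \<forall>\<rho>\<in>Mor L. sr L \<alpha> = rg L \<rho> \<and> \<kappa> = cp L \<alpha> \<rho> \<longrightarrow> cp L \<beta> \<rho> \<notin> w}"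
  have "openin (cylinder_topology L) (?V \<inter> topspace (cylinder_topology L))"
    using assms(5) openin_no_cp_preimage[OF assms(1,2,4)] by (intro openin_INT)
  then show "openin (cylinder_topology L) ?V"
    unfolding topspace_cylinder_topology by simp
  show "w \<in> ?V \<longleftrightarrow> \<nu> \<notin> replace_prefix L \<alpha> \<beta> w" if "is_filter L w" for w
    using mem_replace_prefix_iff[OF assms(1-4) that assms(6,7)] by blast
qed

lemma replace_prefix_XP:
  assumes "\<alpha> \<in> Mor L" "\<beta> \<in> Mor L" "sr L \<alpha> = sr L \<beta>" "\<zeta> \<in> FA L" "prec L \<zeta> \<alpha>"
    and "w \<in> XP L" "\<beta> \<in> w"
  shows "replace_prefix L \<alpha> \<beta> w \<in> XP L"
proof -
  have "is_filter L (replace_prefix L \<alpha> \<beta> w)" "\<alpha> \<in> replace_prefix L \<alpha> \<beta> w"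
    using is_filter_replace_prefix prefix_in_replace_prefix is_filter_XP assms by blast+
  moreover have "\<zeta> \<in> Mor L" using assms(4) unfolding FA_def by blast
  ultimately have "\<zeta> \<in> replace_prefix L \<alpha> \<beta> w"
    using is_filter_hereditary assms(5) by blast
  then show ?thesis
    using \<open>is_filter L (replace_prefix L \<alpha> \<beta> w)\<close> assms(4) unfolding XP_def Filters_def by blast
qed

lemma continuous_map_replace_prefix:
  assumes "\<alpha> \<in> Mor L" "\<beta> \<in> Mor L" "sr L \<alpha> = sr L \<beta>" "\<zeta> \<in> FA L" "prec L \<zeta> \<alpha>"
  shows "continuous_map (subtopology (XTop L) {w \<in> XP L. \<beta> \<in> w}) (XTop L) (replace_prefix L \<alpha> \<beta>)"
proof -
  define D where "D = {w \<in> XP L. \<beta> \<in> w}"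
  have X: "subtopology (XTop L) D = subtopology (cylinder_topology L) D"
    unfolding XTop_eq_subtopology subtopology_subtopology D_def by (simp add: Int_absorb1)
  have "continuous_map (subtopology (cylinder_topology L) D) (cylinder_topology L) (replace_prefix L \<alpha> \<beta>)"
  proof (rule continuous_map_into_cylinder_topology)
    fix \<nu> assume "\<nu> \<in> Mor L"
    have "{w \<in> topspace (subtopology (cylinder_topology L) D). \<nu> \<in> replace_prefix L \<alpha> \<beta> w}
        = D \<inter> {w. \<nu> \<in> replace_prefix L \<alpha> \<beta> w}"
      unfolding topspace_subtopology topspace_cylinder_topology by auto
    then show "openin (subtopology (cylinder_topology L) D)
        {w \<in> topspace (subtopology (cylinder_topology L) D). \<nu> \<in> replace_prefix L \<alpha> \<beta> w}"
      using openin_subtopology_Int2 openin_mem_replace_prefix assms(2,3) by metis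
    \<comment> \<open>Finite alignment at \<open>\<zeta> \<preceq> \<alpha>\<close> is what makes this preimage open.\<close>
    have "\<alpha> \<in> ext L \<zeta>" using assms(5) unfolding prec_def .
    then obtain J where J: "finite J" "J \<subseteq> Mor L" "ext L \<alpha> \<inter> ext L \<nu> = (\<Union>\<kappa>\<in>J. ext L \<kappa>)"
      using assms(4) \<open>\<nu> \<in> Mor L\<close> unfolding FA_def by blast
    obtain V where "openin (cylinder_topology L) V"
      and V: "\<And>w. is_filter L w \<Longrightarrow> w \<in> V \<longleftrightarrow> \<nu> \<notin> replace_prefix L \<alpha> \<beta> w"
      using openin_not_mem_replace_prefix[OF assms(1,2) \<open>\<nu> \<in> Mor L\<close> assms(3) J] by blast
    moreover have "{w \<in> topspace (subtopology (cylinder_topology L) D). \<nu> \<notin> replace_prefix L \<alpha> \<beta> w}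
        = D \<inter> V"
      using V is_filter_XP unfolding topspace_subtopology topspace_cylinder_topology D_def by auto
    ultimately show "openin (subtopology (cylinder_topology L) D)
        {w \<in> topspace (subtopology (cylinder_topology L) D). \<nu> \<notin> replace_prefix L \<alpha> \<beta> w}"
      using openin_subtopology_Int2 by metis
  qed
  moreover have "replace_prefix L \<alpha> \<beta> w \<in> XP L" if "w \<in> D" for w
    using replace_prefix_XP assms that unfolding D_def by blast
  ultimately have "continuous_map (subtopology (cylinder_topology L) D) (XTop L) (replace_prefix L \<alpha> \<beta>)"
    unfolding XTop_eq_subtopology[of L] continuous_map_in_subtopology
    by (auto simp: topspace_subtopology topspace_cylinder_topology)
  with X show ?thesis unfolding D_def by simp
qed

lemma replace_prefix_bdry:
  assumes "\<alpha> \<in> Mor L" "\<beta> \<in> Mor L" "sr L \<alpha> = sr L \<beta>" "\<zeta> \<in> FA L" "prec L \<zeta> \<alpha>"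
    and "y \<in> bdry L" "\<beta> \<in> y"
  shows "replace_prefix L \<alpha> \<beta> y \<in> bdry L"
proof -
  define D where "D = {w \<in> XP L. \<beta> \<in> w}"
  let ?f = "replace_prefix L \<alpha> \<beta>" and ?M = "MaxFilters L \<inter> XP L"
  have "openin (XTop L) D"
    unfolding D_def XTop_eq_subtopology openin_subtopology
    using openin_cylinder_mem[OF assms(2)] by blast
  moreover have "y \<in> D" using assms(6,7) bdry_subset_XP unfolding D_def by blast
  ultimately have "y \<in> XTop L closure_of (D \<inter> ?M)"
    using openin_Int_closure_of_subset assms(6) unfolding bdry_def by blast
  then have "y \<in> subtopology (XTop L) D closure_of (D \<inter> ?M)"
    using \<open>y \<in> D\<close> unfolding closure_of_subtopology by (simp add: Int_assoc)
  then have "?f y \<in> XTop L closure_of (?f ` (D \<inter> ?M))"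
    using continuous_map_image_closure_subset[OF continuous_map_replace_prefix[OF assms(1-5)]]
    unfolding D_def by blast
  moreover have "?f ` (D \<inter> ?M) \<subseteq> ?M"
    using replace_prefix_MaxFilters replace_prefix_XP assms(1-5) unfolding D_def by blast
  ultimately show ?thesis
    unfolding bdry_def using closure_of_mono by blast
qed

lemma PG_replace_prefix:
  assumes "(x, q, y) \<in> PG Q P L"
  obtains \<alpha> \<beta> \<zeta> where "\<alpha> \<in> Mor L" "\<beta> \<in> Mor L" "sr L \<alpha> = sr L \<beta>" "\<zeta> \<in> FA L" "prec L \<zeta> \<alpha>"
    "\<beta> \<in> y" "x = replace_prefix L \<alpha> \<beta> y"
proof -
  obtain m n where "x \<in> XP L" "y \<in> XP L" "indom L x m" "indom L y n" and shifts: "shift L x m = shift L y n"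
    using assms(1) unfolding PG_def by blast
  then have x: "is_filter L x" and y: "is_filter L y" using is_filter_XP by auto
  obtain \<alpha>\<^sub>0 \<beta>\<^sub>0 where "\<alpha>\<^sub>0 \<in> x" "dg L \<alpha>\<^sub>0 = m" "\<beta>\<^sub>0 \<in> y" "dg L \<beta>\<^sub>0 = n"
    using \<open>indom L x m\<close> \<open>indom L y n\<close> unfolding indom_def by blast
  then have "seg L x m = \<alpha>\<^sub>0" "seg L y n = \<beta>\<^sub>0" using seg_eq x y by blast+
  then have \<alpha>\<^sub>0: "\<alpha>\<^sub>0 \<in> Mor L" "\<And>\<mu>. \<mu> \<in> shift L x m \<longleftrightarrow> \<mu> \<in> Mor L \<and> sr L \<alpha>\<^sub>0 = rg L \<mu> \<and> cp L \<alpha>\<^sub>0 \<mu> \<in> x"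
    and \<beta>\<^sub>0: "\<beta>\<^sub>0 \<in> Mor L" "\<And>\<mu>. \<mu> \<in> shift L y n \<longleftrightarrow> \<mu> \<in> Mor L \<and> sr L \<beta>\<^sub>0 = rg L \<mu> \<and> cp L \<beta>\<^sub>0 \<mu> \<in> y"
    using \<open>\<alpha>\<^sub>0 \<in> x\<close> \<open>\<beta>\<^sub>0 \<in> y\<close> is_filter_subset_Mor[OF x] is_filter_subset_Mor[OF y]
    unfolding shift_def by auto
  obtain \<zeta> where "\<zeta> \<in> x" "\<zeta> \<in> FA L" using \<open>x \<in> XP L\<close> unfolding XP_def by blast
  then obtain \<rho> where \<rho>: "\<rho> \<in> Mor L" "sr L \<alpha>\<^sub>0 = rg L \<rho>" "cp L \<alpha>\<^sub>0 \<rho> \<in> x" "prec L \<zeta> (cp L \<alpha>\<^sub>0 \<rho>)"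
    using is_filter_extend_prefix[OF x \<open>\<alpha>\<^sub>0 \<in> x\<close>] by blast
  then have "sr L \<beta>\<^sub>0 = rg L \<rho>" "cp L \<beta>\<^sub>0 \<rho> \<in> y" using \<alpha>\<^sub>0 \<beta>\<^sub>0 shifts by blast+
  define \<alpha> \<beta> where "\<alpha> = cp L \<alpha>\<^sub>0 \<rho>" and "\<beta> = cp L \<beta>\<^sub>0 \<rho>"
  have \<alpha>\<beta>: "\<alpha> \<in> Mor L" "\<beta> \<in> Mor L" "sr L \<alpha> = sr L \<beta>" "sr L \<alpha> = sr L \<rho>"
    unfolding \<alpha>_def \<beta>_def using cp_Mor sr_cp \<alpha>\<^sub>0 \<beta>\<^sub>0 \<rho> \<open>sr L \<beta>\<^sub>0 = rg L \<rho>\<close> by auto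
  have "cp L \<alpha> \<sigma> \<in> x \<longleftrightarrow> cp L \<beta> \<sigma> \<in> y" if "\<sigma> \<in> Mor L" "sr L \<alpha> = rg L \<sigma>" for \<sigma>
  proof -
    have "cp L \<alpha> \<sigma> = cp L \<alpha>\<^sub>0 (cp L \<rho> \<sigma>)" "cp L \<beta> \<sigma> = cp L \<beta>\<^sub>0 (cp L \<rho> \<sigma>)"
      "cp L \<rho> \<sigma> \<in> Mor L" "rg L (cp L \<rho> \<sigma>) = rg L \<rho>"
      unfolding \<alpha>_def \<beta>_def using cp_assoc cp_Mor rg_cp \<alpha>\<^sub>0 \<beta>\<^sub>0 \<rho> \<open>sr L \<beta>\<^sub>0 = rg L \<rho>\<close> that \<alpha>\<beta>(4)
      by auto
    then show ?thesis using \<alpha>\<^sub>0 \<beta>\<^sub>0 \<rho> \<open>sr L \<beta>\<^sub>0 = rg L \<rho>\<close> shifts by metis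
  qed
  then have "replace_prefix L \<alpha> \<beta> y = replace_prefix L \<alpha> \<alpha> x"
    unfolding replace_prefix_def by blast
  also have "\<dots> = x" using replace_prefix_self[OF x] \<rho>(3) \<alpha>_def by simp
  finally show thesis
    using that[OF \<alpha>\<beta>(1-3) \<open>\<zeta> \<in> FA L\<close> \<rho>(4)[folded \<alpha>_def]] \<open>cp L \<beta>\<^sub>0 \<rho> \<in> y\<close> \<beta>_def by simp
qed

lemma PG_source_bdry_imp_range_bdry:
  assumes "(x, q, y) \<in> PG Q P L" "y \<in> bdry L"
  shows "x \<in> bdry L"
  using PG_replace_prefix[OF assms(1)] replace_prefix_bdry assms(2) by metis

lemma unit_in_PG:
  assumes "z \<in> XP L"
  shows "(z, \<one>\<^bsub>Q\<^esub>, z) \<in> PG Q P L"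
proof -
  obtain \<mu> where "\<mu> \<in> z" using is_filter_nonempty is_filter_XP assms by blast
  then have "rg L \<mu> \<in> z" "dg L (rg L \<mu>) = \<one>\<^bsub>Q\<^esub>"
    using is_filter_hereditary is_filter_subset_Mor is_filter_XP assms rg_Mor prec_rg dg_rg by blast+
  then have "indom L z \<one>\<^bsub>Q\<^esub>" unfolding indom_def by blast
  moreover have "\<one>\<^bsub>Q\<^esub> = \<one>\<^bsub>Q\<^esub> \<otimes>\<^bsub>Q\<^esub> inv\<^bsub>Q\<^esub> \<one>\<^bsub>Q\<^esub>"
    using monoid.inv_one monoid.r_one monoid.one_closed group.is_monoid[OF group] by metis
  ultimately show ?thesis unfolding PG_def using assms one_in_P by blast
qed

lemma unit_map_bdry_eq:
  "unit_map Q ` bdry L = {g \<in> topspace (GTop Q P L). fst g \<in> bdry L} \<inter> unit_space Q L"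
  using unit_in_PG bdry_subset_XP
  unfolding unit_map_def unit_space_def topspace_GTop by auto

lemma closedin_unit_map_bdry:
  "closedin (subtopology (GTop Q P L) (unit_space Q L)) (unit_map Q ` bdry L)"
  unfolding unit_map_bdry_eq closedin_subtopology
  using closedin_continuous_map_preimage[OF continuous_map_fst_GTop closedin_bdry] by blast

lemma invariant_unit_map_bdry: "invariant Q (PG Q P L) (unit_map Q ` bdry L)"
  unfolding invariant_def g_rng_def g_src_def unit_map_def
  using PG_source_bdry_imp_range_bdry by force

end

theorem lemma5p16:
  fixes Q :: "('g, 'b) monoid_scheme" and P :: "'g set" and L :: "('a, 'g) pgraph"
  assumes "wqlo Q P"
    and "P_graph Q P L"
    and "FA L \<noteq> {}"
  shows "unit_map Q ` bdry L \<subseteq> unit_space Q L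
    \<and> closedin (subtopology (GTop Q P L) (unit_space Q L)) (unit_map Q ` bdry L)
    \<and> invariant Q (PG Q P L) (unit_map Q ` bdry L)"
proof -
  interpret wqlo_P_graph Q P L using assms(1,2) by unfold_locales
  have "unit_map Q ` bdry L \<subseteq> unit_space Q L"
    unfolding unit_map_def unit_space_def using bdry_subset_XP by blast
  then show ?thesis using closedin_unit_map_bdry invariant_unit_map_bdry by blast
qed

end
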